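(* Let $B$ be a $p\times q$ matrix, $G$ a $q\times q$ symmetric matrix and $G'$ a $p\times p$ symmetric matrix. Let $$A=\begin{bmatrix} G' & B & B\\ B^T & 0 & G\\ B^T & G & 0\end{bmatrix}\quad ((p+2q)\times(p+2q)),\qquad C=\begin{bmatrix} G & B^T & B^T\\ B & 0 & G'\\ B & G' & 0\end{bmatrix}\quad ((2p+q)\times(2p+q)).$$ Then $A\oplus\begin{bmatrix}0 & G'\\ G' & 0\end{bmatrix}\oplus G$ and $C\oplus\begin{bmatrix}0 & G\\ G & 0\end{bmatrix}\oplus G'$ are cospectral.
   Context: For matrices $X,Y$, $X\oplus Y=\begin{bmatrix} X&0\\0&Y\end{bmatrix}$, and $0$ denotes a zero matrix of appropriate size. Two square matrices are cospectral if they have the same eigenvalues with the same multiplicities. *)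

theory Defs
  imports "Jordan_Normal_Form.Char_Poly"
begin

definition dsum :: "'a::zero mat \<Rightarrow> 'a mat \<Rightarrow> 'a mat" where
  "dsum X Y = four_block_mat X (0\<^sub>m (dim_row X) (dim_col Y)) (0\<^sub>m (dim_row Y) (dim_col X)) Y"

definition hcat :: "'a::zero mat \<Rightarrow> 'a mat \<Rightarrow> 'a mat" where
  "hcat X Y = four_block_mat X Y (0\<^sub>m 0 (dim_col X)) (0\<^sub>m 0 (dim_col Y))"

definition vcat :: "'a::zero mat \<Rightarrow> 'a mat \<Rightarrow> 'a mat" where
  "vcat X Y = four_block_mat X (0\<^sub>m (dim_row X) 0) Y (0\<^sub>m (dim_row Y) 0)"

definition eig_mult :: "real mat \<Rightarrow> complex \<Rightarrow> nat" where
  "eig_mult M c = order c (char_poly (map_mat complex_of_real M))"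

definition cospectral :: "real mat \<Rightarrow> real mat \<Rightarrow> bool" where
  "cospectral X Y \<longleftrightarrow> square_mat X \<and> square_mat Y \<and> dim_row X = dim_row Y \<and> (\<forall>c. eig_mult X c = eig_mult Y c)"

end

theory Submission
  imports Defs
begin

text \<open>Conjugating by \<open>H = [[I, I], [I, -I]]\<close>, whose square is \<open>2I\<close>, turns
  \<open>[[0, G], [G, 0]]\<close> into \<open>G \<oplus> -G\<close>. The same change of basis on the last two block rows
  and columns of \<open>A\<close> leaves \<open>M \<oplus> -G\<close> with \<open>M = [[G', 2B], [B\<^sup>T, G]]\<close>; likewise \<open>C\<close>
  becomes \<open>M' \<oplus> -G'\<close> with \<open>M' = [[G, 2B\<^sup>T], [B, G']]\<close>. Rescaling the off-diagonal blocks
  and swapping the two block rows and columns shows that \<open>M\<close> and \<open>M'\<close> are similar, so both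
  direct sums have the characteristic polynomial of \<open>M \<oplus> G \<oplus> -G \<oplus> G' \<oplus> -G'\<close>.\<close>

lemma dsum_carrier_mat [simp]:
  "A \<in> carrier_mat n m \<Longrightarrow> D \<in> carrier_mat k l \<Longrightarrow> dsum A D \<in> carrier_mat (n + k) (m + l)"
  by (simp add: dsum_def)

lemma char_poly_dsum:
  fixes A :: "'a::idom mat"
  assumes A: "A \<in> carrier_mat n n" and D: "D \<in> carrier_mat m m"
  shows "char_poly (dsum A D) = char_poly A * char_poly D"
proof -
  let ?cm = "\<lambda>M. [:0, 1:] \<cdot>\<^sub>m 1\<^sub>m (dim_row M) + map_mat (\<lambda>a. [:- a:]) M"
  have "?cm (dsum A D) = four_block_mat (?cm A) (0\<^sub>m n m) (0\<^sub>m m n) (?cm D)"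
    using A D by (intro eq_matI) (auto simp: dsum_def one_poly_def)
  then show ?thesis
    unfolding char_poly_defs
    by (simp add: det_four_block_mat_upper_right_zero[of _ n _ m] A D)
qed

lemma similar_mat_swap_blocks:
  fixes A :: "'a::semiring_1 mat"
  assumes A: "A \<in> carrier_mat n n" and B: "B \<in> carrier_mat n m"
    and C: "C \<in> carrier_mat m n" and D: "D \<in> carrier_mat m m"
  shows "similar_mat (four_block_mat A B C D) (four_block_mat D C B A)"
proof (rule similar_matI)
  let ?P = "four_block_mat (0\<^sub>m n m) (1\<^sub>m n) (1\<^sub>m m) (0\<^sub>m m n) :: 'a mat"
  let ?Q = "four_block_mat (0\<^sub>m m n) (1\<^sub>m m) (1\<^sub>m n) (0\<^sub>m n m) :: 'a mat"
  have dim: "m + n = n + m" by simp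
  show "{four_block_mat A B C D, four_block_mat D C B A, ?P, ?Q} \<subseteq> carrier_mat (n + m) (n + m)"
    using A B C D by (auto simp: dim)
  show "?P * ?Q = 1\<^sub>m (n + m)"
    by (subst mult_four_block_mat[where ?nr1.0=n and ?n1.0=m and ?n2.0=n and ?nr2.0=m], auto)
  show "?Q * ?P = 1\<^sub>m (n + m)"
    by (subst mult_four_block_mat[where ?nr1.0=m and ?n1.0=n and ?n2.0=m and ?nr2.0=n], auto simp: dim)
  have "?P * four_block_mat D C B A = four_block_mat B A D C"
    using A B C D by (subst mult_four_block_mat[where ?nr1.0=n and ?n1.0=m and ?n2.0=n and ?nr2.0=m]) auto
  also have "\<dots> * ?Q = four_block_mat A B C D"
    using A B C D by (subst mult_four_block_mat[where ?nr1.0=n and ?n1.0=m and ?n2.0=n and ?nr2.0=m]) auto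
  finally show "four_block_mat A B C D = ?P * four_block_mat D C B A * ?Q" by simp
qed

lemma smult_one_mat_mult:
  "dim_row A = n \<Longrightarrow> (k \<cdot>\<^sub>m 1\<^sub>m n) * A = (k::'a::comm_semiring_1) \<cdot>\<^sub>m A"
  using mult_smult_assoc_mat[OF one_carrier_mat carrier_matI[of A n "dim_col A"]] by simp

lemma mult_smult_one_mat:
  "dim_col A = m \<Longrightarrow> A * (k \<cdot>\<^sub>m 1\<^sub>m m) = (k::'a::comm_semiring_1) \<cdot>\<^sub>m A"
  using mult_smult_distrib[OF carrier_matI[of A "dim_row A" m] one_carrier_mat] by simp

lemma similar_mat_scale_off_diagonal:
  fixes A :: "'a::field mat"
  assumes A: "A \<in> carrier_mat n n" and B: "B \<in> carrier_mat n m"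
    and C: "C \<in> carrier_mat m n" and D: "D \<in> carrier_mat m m" and c: "c \<noteq> 0"
  shows "similar_mat (four_block_mat A (c \<cdot>\<^sub>m B) C D) (four_block_mat A B (c \<cdot>\<^sub>m C) D)"
proof -
  have "similar_mat_wit D D ((1 / c) \<cdot>\<^sub>m 1\<^sub>m m) (c \<cdot>\<^sub>m 1\<^sub>m m)"
  proof (rule similar_mat_witI[of _ _ m])
    show "(1 / c) \<cdot>\<^sub>m 1\<^sub>m m * (c \<cdot>\<^sub>m 1\<^sub>m m) = 1\<^sub>m m"
      using c by (simp add: smult_one_mat_mult) auto
    show "c \<cdot>\<^sub>m 1\<^sub>m m * ((1 / c) \<cdot>\<^sub>m 1\<^sub>m m) = 1\<^sub>m m"
      using c by (simp add: smult_one_mat_mult) auto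
    show "D = (1 / c) \<cdot>\<^sub>m 1\<^sub>m m * D * (c \<cdot>\<^sub>m 1\<^sub>m m)"
      using c D by (simp add: smult_one_mat_mult mult_smult_one_mat) auto
  qed (use D in auto)
  moreover have "c \<cdot>\<^sub>m B = 1\<^sub>m n * B * (c \<cdot>\<^sub>m 1\<^sub>m m)"
    using B by (simp add: mult_smult_one_mat)
  moreover have "C = (1 / c) \<cdot>\<^sub>m 1\<^sub>m m * (c \<cdot>\<^sub>m C) * 1\<^sub>m n"
    using C c by (simp add: smult_one_mat_mult) auto
  ultimately have "similar_mat_wit
      (four_block_mat A (c \<cdot>\<^sub>m B) C D) (four_block_mat A B (c \<cdot>\<^sub>m C) D)
    (four_block_mat (1\<^sub>m n) (0\<^sub>m n m) (0\<^sub>m m n) ((1 / c) \<cdot>\<^sub>m 1\<^sub>m m))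
    (four_block_mat (1\<^sub>m n) (0\<^sub>m n m) (0\<^sub>m m n) (c \<cdot>\<^sub>m 1\<^sub>m m))"
    using A B C D by (intro similar_mat_wit_four_block[OF similar_mat_wit_refl[OF A]]) auto
  then show ?thesis unfolding similar_mat_def by blast
qed

definition hadamard_block_mat :: "nat \<Rightarrow> 'a::ring_1 mat" where
  "hadamard_block_mat n = four_block_mat (1\<^sub>m n) (1\<^sub>m n) (1\<^sub>m n) (- 1\<^sub>m n)"

lemma hadamard_block_mat_carrier [simp]: "hadamard_block_mat n \<in> carrier_mat (n + n) (n + n)"
  by (simp add: hadamard_block_mat_def)

lemma hadamard_block_mat_square:
  "hadamard_block_mat n * hadamard_block_mat n = (2 \<cdot>\<^sub>m 1\<^sub>m (n + n) :: 'a::ring_1 mat)"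
  unfolding hadamard_block_mat_def
  by (subst mult_four_block_mat[where ?nr1.0=n and ?n1.0=n and ?n2.0=n and ?nr2.0=n])
    (auto intro!: eq_matI)

lemma similar_mat_wit_off_diagonal_twin:
  fixes G :: "'a::field_char_0 mat"
  assumes G: "G \<in> carrier_mat n n"
  shows "similar_mat_wit (four_block_mat (0\<^sub>m n n) G G (0\<^sub>m n n)) (dsum G (- G))
    (hadamard_block_mat n) ((1 / 2) \<cdot>\<^sub>m hadamard_block_mat n)"
proof (rule similar_mat_witI[of _ _ "n + n"])
  let ?H = "hadamard_block_mat n :: 'a mat"
  have "?H * ?H = 2 \<cdot>\<^sub>m 1\<^sub>m (n + n)"
    by (rule hadamard_block_mat_square)
  then show "?H * ((1 / 2) \<cdot>\<^sub>m ?H) = 1\<^sub>m (n + n)" "(1 / 2) \<cdot>\<^sub>m ?H * ?H = 1\<^sub>m (n + n)"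
    by (simp_all add: mult_smult_distrib[OF hadamard_block_mat_carrier hadamard_block_mat_carrier]
        mult_smult_assoc_mat[OF hadamard_block_mat_carrier hadamard_block_mat_carrier]) auto
  have HD: "?H * dsum G (- G) = four_block_mat G (- G) G G"
    unfolding hadamard_block_mat_def dsum_def using G
    by (subst mult_four_block_mat[where ?nr1.0=n and ?n1.0=n and ?n2.0=n and ?nr2.0=n]) auto
  have DH: "four_block_mat G (- G) G G * ?H = 2 \<cdot>\<^sub>m four_block_mat (0\<^sub>m n n) G G (0\<^sub>m n n)"
    unfolding hadamard_block_mat_def using G
    by (subst mult_four_block_mat[where ?nr1.0=n and ?n1.0=n and ?n2.0=n and ?nr2.0=n]) auto
  have "?H * dsum G (- G) * ((1 / 2) \<cdot>\<^sub>m ?H) = (1 / 2) \<cdot>\<^sub>m (four_block_mat G (- G) G G * ?H)"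
    unfolding HD using G by (intro mult_smult_distrib[OF _ hadamard_block_mat_carrier]) auto
  then show "four_block_mat (0\<^sub>m n n) G G (0\<^sub>m n n) = ?H * dsum G (- G) * ((1 / 2) \<cdot>\<^sub>m ?H)"
    unfolding DH by auto
qed (use G in \<open>auto simp: dsum_def\<close>)

lemma hcat_carrier_mat [simp]:
  "X \<in> carrier_mat a b \<Longrightarrow> Y \<in> carrier_mat a c \<Longrightarrow> hcat X Y \<in> carrier_mat a (b + c)"
  unfolding hcat_def carrier_mat_def by simp

lemma vcat_carrier_mat [simp]:
  "X \<in> carrier_mat a c \<Longrightarrow> Y \<in> carrier_mat b c \<Longrightarrow> vcat X Y \<in> carrier_mat (a + b) c"
  unfolding vcat_def carrier_mat_def by simp

lemma hcat_mult_four_block_mat: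
  assumes "X \<in> carrier_mat a b" "Y \<in> carrier_mat a c"
    "M1 \<in> carrier_mat b e" "M2 \<in> carrier_mat b f" "M3 \<in> carrier_mat c e" "M4 \<in> carrier_mat c f"
  shows "hcat X Y * four_block_mat M1 M2 M3 M4 = hcat (X * M1 + Y * M3) (X * M2 + Y * M4)"
  unfolding hcat_def using assms
  by (subst mult_four_block_mat[where ?nr1.0=a and ?n1.0=b and ?n2.0=c and ?nr2.0=0])
    auto

lemma four_block_mat_mult_vcat:
  assumes "M1 \<in> carrier_mat a b" "M2 \<in> carrier_mat a c" "M3 \<in> carrier_mat d b" "M4 \<in> carrier_mat d c"
    "X \<in> carrier_mat b e" "Y \<in> carrier_mat c e"
  shows "four_block_mat M1 M2 M3 M4 * vcat X Y = vcat (M1 * X + M2 * Y) (M3 * X + M4 * Y)"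
  unfolding vcat_def using assms
  by (subst mult_four_block_mat[where ?nr1.0=a and ?n1.0=b and ?n2.0=c and ?nr2.0=d])
    auto

lemma four_block_mat_hcat_vcat_dsum:
  assumes "X \<in> carrier_mat p p" "B \<in> carrier_mat p q" "C \<in> carrier_mat q p"
    "D \<in> carrier_mat q q" "E \<in> carrier_mat r r"
  shows "four_block_mat X (hcat B (0\<^sub>m p r)) (vcat C (0\<^sub>m r p)) (dsum D E)
    = dsum (four_block_mat X B C D) E"
  using assms by (intro eq_matI) (auto simp: hcat_def vcat_def dsum_def)

lemma similar_mat_twin_off_diagonal_blocks:
  fixes X :: "'a::field_char_0 mat"
  assumes X: "X \<in> carrier_mat p p" and B: "B \<in> carrier_mat p q"
    and C: "C \<in> carrier_mat q p" and G: "G \<in> carrier_mat q q"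
  shows "similar_mat
    (four_block_mat X (hcat B B) (vcat C C) (four_block_mat (0\<^sub>m q q) G G (0\<^sub>m q q)))
    (dsum (four_block_mat X (2 \<cdot>\<^sub>m B) C G) (- G))"
proof -
  let ?H = "hadamard_block_mat q :: 'a mat"
  have "hcat (2 \<cdot>\<^sub>m B) (0\<^sub>m p q) * ?H = hcat (2 \<cdot>\<^sub>m B) (2 \<cdot>\<^sub>m B)"
    unfolding hadamard_block_mat_def using B
    by (subst hcat_mult_four_block_mat[of _ p q _ q]) (auto simp: hcat_def)
  then have "hcat (2 \<cdot>\<^sub>m B) (0\<^sub>m p q) * ((1 / 2) \<cdot>\<^sub>m ?H)
      = (1 / 2) \<cdot>\<^sub>m hcat (2 \<cdot>\<^sub>m B) (2 \<cdot>\<^sub>m B)"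
    using B by (subst mult_smult_distrib[OF _ hadamard_block_mat_carrier, of _ p]) auto
  also have "\<dots> = hcat B B"
    using B by (intro eq_matI) (auto simp: hcat_def)
  finally have UR: "hcat B B = 1\<^sub>m p * hcat (2 \<cdot>\<^sub>m B) (0\<^sub>m p q) * ((1 / 2) \<cdot>\<^sub>m ?H)"
    using B by (simp add: hcat_def)
  have LL: "vcat C C = ?H * vcat C (0\<^sub>m q p) * 1\<^sub>m p"
    unfolding hadamard_block_mat_def using C
    by (subst four_block_mat_mult_vcat[of _ q q _ q _ q _ _ p]) (auto simp: vcat_def)
  have "similar_mat_wit
      (four_block_mat X (hcat B B) (vcat C C) (four_block_mat (0\<^sub>m q q) G G (0\<^sub>m q q)))
      (four_block_mat X (hcat (2 \<cdot>\<^sub>m B) (0\<^sub>m p q)) (vcat C (0\<^sub>m q p)) (dsum G (- G)))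
      (four_block_mat (1\<^sub>m p) (0\<^sub>m p (q + q)) (0\<^sub>m (q + q) p) ?H)
      (four_block_mat (1\<^sub>m p) (0\<^sub>m p (q + q)) (0\<^sub>m (q + q) p) ((1 / 2) \<cdot>\<^sub>m ?H))"
    using X B C G UR LL
    by (intro similar_mat_wit_four_block[OF similar_mat_wit_refl[OF X]
          similar_mat_wit_off_diagonal_twin[OF G]]) auto
  then show ?thesis
    unfolding four_block_mat_hcat_vcat_dsum[OF X smult_carrier_mat[OF B] C G uminus_carrier_mat[OF G]]
      similar_mat_def by blast
qed

lemma char_poly_twin_off_diagonal_blocks:
  fixes X :: "'a::field_char_0 mat"
  assumes X: "X \<in> carrier_mat p p" and B: "B \<in> carrier_mat p q"
    and C: "C \<in> carrier_mat q p" and G: "G \<in> carrier_mat q q"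
  shows "char_poly (four_block_mat X (hcat B B) (vcat C C) (four_block_mat (0\<^sub>m q q) G G (0\<^sub>m q q)))
    = char_poly (four_block_mat X (2 \<cdot>\<^sub>m B) C G) * char_poly (- G)"
  using char_poly_similar[OF similar_mat_twin_off_diagonal_blocks[OF assms]] X B C G
  by (simp add: char_poly_dsum[of _ "p + q" _ q])

lemma char_poly_off_diagonal_twin:
  fixes G :: "'a::field_char_0 mat"
  assumes G: "G \<in> carrier_mat n n"
  shows "char_poly (four_block_mat (0\<^sub>m n n) G G (0\<^sub>m n n)) = char_poly G * char_poly (- G)"
proof -
  have "char_poly (four_block_mat (0\<^sub>m n n) G G (0\<^sub>m n n)) = char_poly (dsum G (- G))"
    using similar_mat_wit_off_diagonal_twin[OF G] by (intro char_poly_similar) (auto simp: similar_mat_def)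
  also have "\<dots> = char_poly G * char_poly (- G)"
    using G by (intro char_poly_dsum[of _ n _ n]) auto
  finally show ?thesis .
qed

lemma char_poly_twin_block_sum:
  fixes X :: "'a::field_char_0 mat"
  assumes X: "X \<in> carrier_mat p p" and B: "B \<in> carrier_mat p q"
    and C: "C \<in> carrier_mat q p" and G: "G \<in> carrier_mat q q"
  shows "char_poly (dsum (dsum
      (four_block_mat X (hcat B B) (vcat C C) (four_block_mat (0\<^sub>m q q) G G (0\<^sub>m q q)))
      (four_block_mat (0\<^sub>m p p) X X (0\<^sub>m p p))) G)
    = char_poly (four_block_mat X (2 \<cdot>\<^sub>m B) C G) * char_poly (- G) * (char_poly X * char_poly (- X))
      * char_poly G"
proof -
  have "four_block_mat X (hcat B B) (vcat C C) (four_block_mat (0\<^sub>m q q) G G (0\<^sub>m q q))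
      \<in> carrier_mat (p + (q + q)) (p + (q + q))"
    and "four_block_mat (0\<^sub>m p p) X X (0\<^sub>m p p) \<in> carrier_mat (p + p) (p + p)"
    using X B C G by auto
  from char_poly_dsum[OF dsum_carrier_mat[OF this] G] char_poly_dsum[OF this]
  show ?thesis
    by (simp add: char_poly_twin_off_diagonal_blocks[OF X B C G] char_poly_off_diagonal_twin[OF X])
qed

lemma char_poly_eq_imp_cospectral:
  assumes X: "X \<in> carrier_mat n n" and Y: "Y \<in> carrier_mat m m"
    and char_poly_eq: "char_poly X = char_poly Y"
  shows "cospectral X Y"
proof -
  have "n = m"
    using degree_monic_char_poly[OF X] degree_monic_char_poly[OF Y] char_poly_eq by simp
  have "char_poly (map_mat complex_of_real X) = map_poly complex_of_real (char_poly X)"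
    by (rule of_real_hom.char_poly_hom[OF X])
  also have "\<dots> = char_poly (map_mat complex_of_real Y)"
    unfolding char_poly_eq by (rule of_real_hom.char_poly_hom[OF Y, symmetric])
  finally show ?thesis
    using X Y \<open>n = m\<close> unfolding cospectral_def eig_mult_def by auto
qed

theorem theorem3p8:
  fixes B G G' :: "real mat" and p q :: nat
  assumes "B \<in> carrier_mat p q"
    and "G \<in> carrier_mat q q" and "transpose_mat G = G"
    and "G' \<in> carrier_mat p p" and "transpose_mat G' = G'"
  shows "cospectral
    (dsum (dsum
      (four_block_mat G' (hcat B B) (vcat (transpose_mat B) (transpose_mat B))
         (four_block_mat (0\<^sub>m q q) G G (0\<^sub>m q q)))
      (four_block_mat (0\<^sub>m p p) G' G' (0\<^sub>m p p))) G)
    (dsum (dsum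
      (four_block_mat G (hcat (transpose_mat B) (transpose_mat B)) (vcat B B)
         (four_block_mat (0\<^sub>m p p) G' G' (0\<^sub>m p p)))
      (four_block_mat (0\<^sub>m q q) G G (0\<^sub>m q q))) G')"
    (is "cospectral ?L ?R")
proof -
  have B: "B \<in> carrier_mat p q" and Bt: "transpose_mat B \<in> carrier_mat q p"
    and G: "G \<in> carrier_mat q q" and G': "G' \<in> carrier_mat p p"
    using assms by auto
  let ?M = "four_block_mat G' (2 \<cdot>\<^sub>m B) (transpose_mat B) G"
  let ?M' = "four_block_mat G (2 \<cdot>\<^sub>m transpose_mat B) B G'"
  have "similar_mat ?M ?M'"
    using similar_mat_trans[OF similar_mat_scale_off_diagonal[OF G' B Bt G, of 2]
        similar_mat_swap_blocks[OF G' B smult_carrier_mat[OF Bt] G]]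
    by simp
  then have M: "char_poly ?M = char_poly ?M'"
    by (rule char_poly_similar)
  show ?thesis
  proof (rule char_poly_eq_imp_cospectral)
    show "char_poly ?L = char_poly ?R"
      unfolding char_poly_twin_block_sum[OF G' B Bt G] char_poly_twin_block_sum[OF G Bt B G'] M
      by (simp add: ac_simps)
    show "?L \<in> carrier_mat (p + (q + q) + (p + p) + q) (p + (q + q) + (p + p) + q)"
      and "?R \<in> carrier_mat (q + (p + p) + (q + q) + p) (q + (p + p) + (q + q) + p)"
      using B Bt G G' by simp_all
  qed
qed

end
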